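(* Let $n\ge2$, $\psi\in\mathrm{Aut}(F_n)$, and let $X\to R_n$ be a finite regular cover corresponding to a characteristic finite-index subgroup $K=\pi_1(X)\le F_n$, with deck group $\Gamma=F_n/K$. Then the automorphism of $\Gamma$ induced by $\psi$ is the identity if and only if the automorphism of $H_1(X,\mathbb{Z})$ induced by $\psi$ is $\Gamma$-equivariant, i.e. $\psi(w\cdot d)=w\cdot\psi(d)$ for all $w\in F_n$ (equivalently all $w\in\Gamma$) and $d\in H_1(X,\mathbb{Z})$.
   Context: $F_n$ is the free group of rank $n\ge2$, identified with $\pi_1(R_n,* )$, $R_n$ the wedge of $n$ circles. $K$ characteristic means $\psi(K)=K$ for all $\psi\in\mathrm{Aut}(F_n)$. $H_1(X,\mathbb{Z})\cong K^{ab}=K/[K,K]$; the action $w\cdot d$ of $w\in F_n$ on $d\in K^{ab}$ is induced by conjugation $\gamma\mapsto w\gamma w^{-1}$ on $K$ and factors through $\Gamma$. The automorphism of $H_1(X,\mathbb{Z})$ induced by $\psi$ is the abelianization of $\psi|_K$. *)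

theory Defs
  imports "HOL-Algebra.Algebra"
begin

text \<open>A letter (b, i) stands for the generator x_i if b = True and for its inverse if b = False.\<close>

type_synonym fg_word = "(bool \<times> nat) list"

fun fg_push :: "bool \<times> nat \<Rightarrow> fg_word \<Rightarrow> fg_word" where
  "fg_push x [] = [x]"
| "fg_push x (y # ys) = (if snd x = snd y \<and> fst x \<noteq> fst y then ys else x # y # ys)"

definition fg_reduce :: "fg_word \<Rightarrow> fg_word" where
  "fg_reduce ws = foldr fg_push ws []"

definition fg_inv :: "fg_word \<Rightarrow> fg_word" where
  "fg_inv ws = rev (map (\<lambda>(b, i). (\<not> b, i)) ws)"

definition free_group :: "nat \<Rightarrow> fg_word monoid" where
  "free_group n = \<lparr> carrier = {ws. fg_reduce ws = ws \<and> (\<forall>x\<in>set ws. snd x < n)},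
                    monoid.mult = (\<lambda>u v. fg_reduce (u @ v)),
                    one = [] \<rparr>"

definition characteristic :: "('a, 'b) monoid_scheme \<Rightarrow> 'a set \<Rightarrow> bool" where
  "characteristic G K \<longleftrightarrow> subgroup K G \<and> (\<forall>\<phi>\<in>auto G. \<phi> ` K = K)"

section \<open>Deck group Gamma = G/K and the first homology K^ab = K/[K,K] of the cover\<close>

definition deck_group_induced_is_id :: "('a, 'b) monoid_scheme \<Rightarrow> 'a set \<Rightarrow> ('a \<Rightarrow> 'a) \<Rightarrow> bool" where
  "deck_group_induced_is_id G K \<psi> \<longleftrightarrow> (\<forall>C\<in>carrier (G Mod K). \<psi> ` C = C)"

definition abelianization_carrier :: "('a, 'b) monoid_scheme \<Rightarrow> 'a set \<Rightarrow> 'a set set" where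
  "abelianization_carrier G K = carrier ((G\<lparr>carrier := K\<rparr>) Mod (derived G K))"

definition conj_action :: "('a, 'b) monoid_scheme \<Rightarrow> 'a \<Rightarrow> 'a set \<Rightarrow> 'a set" where
  "conj_action G w D = (\<lambda>\<gamma>. w \<otimes>\<^bsub>G\<^esub> \<gamma> \<otimes>\<^bsub>G\<^esub> inv\<^bsub>G\<^esub> w) ` D"

definition homology_induced :: "('a \<Rightarrow> 'a) \<Rightarrow> 'a set \<Rightarrow> 'a set" where
  "homology_induced \<psi> D = \<psi> ` D"

definition homology_equivariant :: "('a, 'b) monoid_scheme \<Rightarrow> 'a set \<Rightarrow> ('a \<Rightarrow> 'a) \<Rightarrow> bool" where
  "homology_equivariant G K \<psi> \<longleftrightarrow>
     (\<forall>w\<in>carrier G. \<forall>D\<in>abelianization_carrier G K.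
        homology_induced \<psi> (conj_action G w D) = conj_action G w (homology_induced \<psi> D))"

end

theory Submission
  imports Defs
begin

text \<open>
  Both conditions are statements about the elements \<open>\<psi>(w) w\<^sup>-\<^sup>1\<close>. If they all lie in \<open>K\<close>,
  then \<open>\<psi>(w) = k w\<close> with \<open>k \<in> K\<close>, and conjugation by \<open>k\<close> is trivial on \<open>K/[K,K]\<close>, so
  \<open>\<psi>\<close> commutes with the action. Conversely, equivariance says that \<open>g = w\<^sup>-\<^sup>1 \<psi>(w)\<close> acts
  trivially on \<open>K/[K,K]\<close>, and the action of \<open>F\<^sub>n/K\<close> on \<open>K/[K,K]\<close> is faithful for \<open>n \<ge> 2\<close>.
  Faithfulness is shown with Fox derivatives: the coefficients of \<open>\<partial>k/\<partial>x\<^sub>i\<close> in \<open>\<int>[F\<^sub>n/K]\<close>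
  are additive in \<open>k \<in> K\<close>, vanish on \<open>[K,K]\<close> and are translated by conjugation, so for
  \<open>g\<close> acting trivially they are invariant under translation by \<open>g\<close>. If \<open>g \<notin> K\<close>, evaluating
  them on \<open>x\<^sub>0\<^sup>s x\<^sub>1\<^sup>-\<^sup>t \<in> K\<close>, where \<open>g K = x\<^sub>0\<^sup>s K = x\<^sub>1\<^sup>t K\<close> with \<open>s > 0\<close> minimal, gives a contradiction.
\<close>

section \<open>Reduced words\<close>

definition letter_inv :: "bool \<times> nat \<Rightarrow> bool \<times> nat" where
  "letter_inv x = (\<not> fst x, snd x)"

lemma letter_inv_letter_inv [simp]: "letter_inv (letter_inv x) = x"
  by (simp add: letter_inv_def)

lemma fst_letter_inv [simp]: "fst (letter_inv x) = (\<not> fst x)"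
  by (simp add: letter_inv_def)

lemma snd_letter_inv [simp]: "snd (letter_inv x) = snd x"
  by (simp add: letter_inv_def)

fun reduced :: "fg_word \<Rightarrow> bool" where
  "reduced [] = True"
| "reduced [x] = True"
| "reduced (x # y # ys) \<longleftrightarrow> \<not> (snd x = snd y \<and> fst x \<noteq> fst y) \<and> reduced (y # ys)"

lemma reduced_tl: "reduced (x # ys) \<Longrightarrow> reduced ys"
  by (cases ys) auto

lemma reduced_fg_push: "reduced ws \<Longrightarrow> reduced (fg_push x ws)"
  by (cases ws) (auto dest: reduced_tl)

lemma reduced_foldr_fg_push: "reduced w \<Longrightarrow> reduced (foldr fg_push u w)"
  by (induction u) (auto intro: reduced_fg_push)

lemma reduced_fg_reduce: "reduced (fg_reduce ws)"
  unfolding fg_reduce_def by (simp add: reduced_foldr_fg_push)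

lemma fg_reduce_Nil [simp]: "fg_reduce [] = []"
  by (simp add: fg_reduce_def)

lemma fg_reduce_Cons: "fg_reduce (x # ws) = fg_push x (fg_reduce ws)"
  unfolding fg_reduce_def by simp

lemma fg_reduce_append: "fg_reduce (u @ v) = foldr fg_push u (fg_reduce v)"
  unfolding fg_reduce_def by simp

lemma fg_reduce_reduced: "reduced ws \<Longrightarrow> fg_reduce ws = ws"
proof (induction ws)
  case Nil
  then show ?case by (simp add: fg_reduce_def)
next
  case (Cons x ws)
  then have "fg_reduce ws = ws" using reduced_tl by blast
  then show ?case using Cons.prems by (cases ws) (auto simp: fg_reduce_Cons)
qed

lemma fg_push_letter_inv: "reduced s \<Longrightarrow> fg_push (letter_inv y) (fg_push y s) = s"
  by (cases s rule: reduced.cases) (auto simp: letter_inv_def)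

lemma foldr_fg_push_fg_push:
  assumes "reduced w"
  shows "foldr fg_push (fg_push x r) w = fg_push x (foldr fg_push r w)"
proof (cases r)
  case (Cons y r')
  show ?thesis
  proof (cases "snd x = snd y \<and> fst x \<noteq> fst y")
    case True
    then have "y = letter_inv x" by (cases x, cases y) (auto simp: letter_inv_def)
    then show ?thesis
      using Cons True fg_push_letter_inv[of _ "letter_inv x"] reduced_foldr_fg_push[OF assms]
      by simp
  qed (use Cons in auto)
qed simp

lemma foldr_fg_push_fg_reduce: "reduced w \<Longrightarrow> foldr fg_push (fg_reduce u) w = foldr fg_push u w"
  by (induction u) (simp_all add: fg_reduce_def foldr_fg_push_fg_push[folded fg_reduce_def])

lemma fg_reduce_append_left: "fg_reduce (fg_reduce u @ v) = fg_reduce (u @ v)"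
  by (simp add: fg_reduce_append foldr_fg_push_fg_reduce reduced_fg_reduce)

lemma fg_reduce_append_right: "fg_reduce (u @ fg_reduce v) = fg_reduce (u @ v)"
  by (simp add: fg_reduce_append fg_reduce_reduced reduced_fg_reduce)

lemma set_fg_reduce: "set (fg_reduce ws) \<subseteq> set ws"
proof (induction ws)
  case (Cons x ws)
  have "set (fg_push x v) \<subseteq> insert x (set v)" for v
    by (cases v) auto
  then show ?case using Cons by (fastforce simp: fg_reduce_Cons)
qed (simp add: fg_reduce_def)

lemma foldr_fg_push_fg_inv: "reduced s \<Longrightarrow> foldr fg_push (fg_inv u) (foldr fg_push u s) = s"
proof (induction u)
  case (Cons x u)
  have "fg_inv (x # u) = fg_inv u @ [letter_inv x]"
    by (simp add: fg_inv_def letter_inv_def case_prod_beta)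
  then show ?case using Cons fg_push_letter_inv reduced_foldr_fg_push by simp
qed (simp add: fg_inv_def)

lemma fg_reduce_eq_iff_reduced: "fg_reduce ws = ws \<longleftrightarrow> reduced ws"
  using fg_reduce_reduced reduced_fg_reduce by metis

lemma carrier_free_group:
  "carrier (free_group n) = {ws. reduced ws \<and> snd ` set ws \<subseteq> {..<n}}"
  by (auto simp: free_group_def fg_reduce_eq_iff_reduced)

lemma mult_free_group: "u \<otimes>\<^bsub>free_group n\<^esub> v = fg_reduce (u @ v)"
  by (simp add: free_group_def)

lemma one_free_group: "\<one>\<^bsub>free_group n\<^esub> = []"
  by (simp add: free_group_def)

lemma fg_reduce_in_carrier: "snd ` set ws \<subseteq> {..<n} \<Longrightarrow> fg_reduce ws \<in> carrier (free_group n)"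
  using set_fg_reduce[of ws] by (auto simp: carrier_free_group reduced_fg_reduce)

lemma group_free_group: "group (free_group n)"
proof (rule groupI)
  fix x y
  assume "x \<in> carrier (free_group n)" "y \<in> carrier (free_group n)"
  then show "x \<otimes>\<^bsub>free_group n\<^esub> y \<in> carrier (free_group n)"
    unfolding mult_free_group by (intro fg_reduce_in_carrier) (auto simp: carrier_free_group)
next
  fix x
  assume x: "x \<in> carrier (free_group n)"
  have "fg_reduce (fg_inv x) \<in> carrier (free_group n)"
    using x by (intro fg_reduce_in_carrier) (force simp: carrier_free_group fg_inv_def)
  moreover have "fg_reduce (fg_inv x @ x) = []"
    using foldr_fg_push_fg_inv[of "[]" x] by (simp add: fg_reduce_append fg_reduce_def)
  ultimately show "\<exists>y\<in>carrier (free_group n). y \<otimes>\<^bsub>free_group n\<^esub> x = \<one>\<^bsub>free_group n\<^esub>"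
    by (metis mult_free_group one_free_group fg_reduce_append_left)
qed (auto simp: carrier_free_group mult_free_group one_free_group fg_reduce_reduced
                fg_reduce_append_left fg_reduce_append_right)

lemma (in group) inv_mult_cancel_left [simp]:
  "x \<in> carrier G \<Longrightarrow> y \<in> carrier G \<Longrightarrow> inv x \<otimes> (x \<otimes> y) = y"
  by (simp add: m_assoc [symmetric])

lemma (in group) mult_inv_cancel_left [simp]:
  "x \<in> carrier G \<Longrightarrow> y \<in> carrier G \<Longrightarrow> x \<otimes> (inv x \<otimes> y) = y"
  by (simp add: m_assoc [symmetric])

lemma (in group) conjugation_in_auto:
  assumes "g \<in> carrier G"
  shows "(\<lambda>h\<in>carrier G. g \<otimes> h \<otimes> inv g) \<in> auto G"
  unfolding auto_def Bij_def using conjugation_is_bij[OF assms]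
  by (auto intro!: homI simp: assms m_assoc)

lemma (in group) characteristic_imp_normal:
  assumes "characteristic G K"
  shows "K \<lhd> G"
proof -
  have K: "subgroup K G" and inv: "\<And>\<phi>. \<phi> \<in> auto G \<Longrightarrow> \<phi> ` K = K"
    using assms unfolding characteristic_def by auto
  have "g \<otimes> h \<otimes> inv g \<in> K" if "g \<in> carrier G" "h \<in> K" for g h
  proof -
    have "(\<lambda>h\<in>carrier G. g \<otimes> h \<otimes> inv g) ` K = K"
      using inv conjugation_in_auto that(1) by blast
    then show ?thesis
      using that subgroup.subset[OF K] by force
  qed
  then show ?thesis using normal_inv_iff K by blast
qed

lemma (in normal) mult_mem_commute:
  assumes "a \<in> carrier G" "b \<in> carrier G"
  shows "a \<otimes> b \<in> H \<longleftrightarrow> b \<otimes> a \<in> H"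
proof -
  have "b \<otimes> a \<in> H" if "a \<in> carrier G" "b \<in> carrier G" "a \<otimes> b \<in> H" for a b
  proof -
    have "inv a \<otimes> (a \<otimes> b) \<otimes> a \<in> H" using inv_op_closed1 that by blast
    then show ?thesis using that by (simp add: m_assoc [symmetric])
  qed
  then show ?thesis using assms by blast
qed

lemma (in group) subgroup_mult_mem_iff:
  assumes H: "subgroup H G" and k: "k \<in> H" and y: "y \<in> carrier G"
  shows "k \<otimes> y \<in> H \<longleftrightarrow> y \<in> H"
proof
  have kc: "k \<in> carrier G" using subgroup.mem_carrier[OF H k] .
  assume "k \<otimes> y \<in> H"
  then have "inv k \<otimes> (k \<otimes> y) \<in> H" using H k by (simp add: subgroup.m_closed subgroup.m_inv_closed)
  then show "y \<in> H" using kc y by (simp add: m_assoc [symmetric])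
qed (use H k in \<open>simp add: subgroup.m_closed\<close>)

lemma (in group) pow_mem_subgroup_of_finite_index:
  assumes H: "subgroup H G" and fin: "finite (rcosets H)" and a: "a \<in> carrier G"
  shows "\<exists>r>0. a [^] (r::nat) \<in> H"
proof -
  let ?f = "\<lambda>m::nat. H #> a [^] m"
  have "?f ` UNIV \<subseteq> rcosets H"
    using a subgroup.subset[OF H] by (auto intro: rcosetsI)
  then have "\<not> inj ?f"
    using fin finite_subset finite_imageD infinite_UNIV_nat by blast
  then obtain p q where "p < q" "?f p = ?f q"
    unfolding inj_def by (metis linorder_neq_iff)
  then have "a [^] q \<in> H #> a [^] p"
    using rcos_self[OF _ H] a by simp
  then have "a [^] q \<otimes> inv (a [^] p) \<in> H"
    using subgroup.rcos_module_imp[OF H is_group] a by simp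
  moreover have "a [^] q = a [^] (q - p) \<otimes> a [^] p"
    using \<open>p < q\<close> a by (simp add: nat_pow_mult)
  then have "a [^] q \<otimes> inv (a [^] p) = a [^] (q - p)"
    using a by (simp add: m_assoc)
  ultimately show ?thesis using \<open>p < q\<close> by (intro exI[of _ "q - p"]) auto
qed

lemma (in group_hom) image_r_coset:
  assumes "S \<subseteq> carrier G" "a \<in> carrier G"
  shows "h ` (S #> a) = h ` S #>\<^bsub>H\<^esub> h a"
  using assms unfolding r_coset_def by (force simp: subsetD)

lemma (in normal) conj_image_r_coset:
  assumes u: "u \<in> carrier G" and e: "e \<in> carrier G"
  shows "(\<lambda>x. u \<otimes> x \<otimes> inv u) ` (H #> e) = H #> (u \<otimes> e \<otimes> inv u)"
proof -
  let ?c = "\<lambda>x. u \<otimes> x \<otimes> inv u"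
  have conj_H: "?c ` H = H"
  proof (intro equalityI subsetI)
    fix m assume m: "m \<in> H"
    then have "m \<in> carrier G" using subset by blast
    then have "?c (inv u \<otimes> m \<otimes> u) = m"
      using u by (simp add: m_assoc)
    moreover have "inv u \<otimes> m \<otimes> u \<in> H" using u m inv_op_closed1 by blast
    ultimately show "m \<in> ?c ` H" by (rule image_eqI [OF sym])
  qed (use u inv_op_closed2 in auto)
  have "?c ` (H #> e) = (\<lambda>m. ?c (m \<otimes> e)) ` H"
    unfolding r_coset_def by auto
  also have "\<dots> = (\<lambda>m. ?c m \<otimes> ?c e) ` H"
    using u e subset by (intro image_cong) (auto simp: m_assoc)
  also have "\<dots> = (\<lambda>m. m \<otimes> ?c e) ` (?c ` H)"
    by (simp add: image_image)
  also have "\<dots> = H #> ?c e"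
    unfolding conj_H r_coset_def by auto
  finally show ?thesis .
qed

lemma (in group) derived_r_coset_conj:
  assumes K: "K \<subseteq> carrier G" and k: "k \<in> K" and f: "f \<in> K"
  shows "derived G K #> (k \<otimes> f \<otimes> inv k) = derived G K #> f"
proof -
  interpret N: subgroup "derived G K" G using derived_is_subgroup[OF K] .
  have kf: "k \<in> carrier G" "f \<in> carrier G" using k f K by auto
  have "k \<otimes> f \<otimes> inv k \<otimes> inv f \<in> derived G K"
    unfolding derived_def using k f by (intro generate.incl) blast
  then have "k \<otimes> f \<otimes> inv k \<in> derived G K #> f"
    using N.rcos_module_rev[OF is_group] kf by simp
  then show ?thesis
    using repr_independence[OF _ _ N.subgroup_axioms] kf by simp
qed

lemma deck_group_induced_is_id_iff:
  fixes G :: "('a, 'b) monoid_scheme" (structure)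
  assumes "group_hom G G \<psi>" "subgroup K G" "\<psi> ` K = K"
  shows "deck_group_induced_is_id G K \<psi> \<longleftrightarrow> (\<forall>w\<in>carrier G. \<psi> w \<otimes> inv w \<in> K)"
proof -
  interpret group_hom G G \<psi> by fact
  interpret K: subgroup K G by fact
  have "\<psi> ` (K #> w) = K #> w \<longleftrightarrow> \<psi> w \<otimes> inv w \<in> K" if w: "w \<in> carrier G" for w
  proof -
    have "\<psi> ` (K #> w) = K #> \<psi> w"
      using image_r_coset[OF K.subset w] assms(3) by simp
    also have "K #> \<psi> w = K #> w \<longleftrightarrow> \<psi> w \<in> K #> w"
      using w G.repr_independence[OF _ _ assms(2)] G.repr_independenceD[OF assms(2)] by auto
    also have "\<dots> \<longleftrightarrow> \<psi> w \<otimes> inv w \<in> K"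
      using K.rcos_module[OF G.is_group] w by simp
    finally show ?thesis .
  qed
  then show ?thesis
    unfolding deck_group_induced_is_id_def carrier_FactGroup by auto
qed

lemma homology_equivariant_iff:
  fixes G :: "('a, 'b) monoid_scheme" (structure)
  assumes "group_hom G G \<psi>" "K \<lhd> G" "\<psi> ` K = K"
  shows "homology_equivariant G K \<psi> \<longleftrightarrow>
    (\<forall>w\<in>carrier G. \<forall>d\<in>K. derived G K #> \<psi> (w \<otimes> d \<otimes> inv w)
                          = derived G K #> (w \<otimes> \<psi> d \<otimes> inv w))"
proof -
  interpret group_hom G G \<psi> by fact
  interpret K: normal K G by fact
  let ?N = "derived G K"
  interpret N: normal ?N G using G.derived_is_normal[OF assms(2)] .
  have Kc: "K \<subseteq> carrier G" by (rule K.subset)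
  have "\<psi> ` ?N = ?N"
    using derived_img[OF Kc] assms(3) by simp
  then have hom: "homology_induced \<psi> (?N #> e) = ?N #> \<psi> e" if "e \<in> carrier G" for e
    unfolding homology_induced_def using image_r_coset[OF N.subset that] by simp
  have conj: "conj_action G w (?N #> e) = ?N #> (w \<otimes> e \<otimes> inv w)"
    if "w \<in> carrier G" "e \<in> carrier G" for w e
    unfolding conj_action_def using N.conj_image_r_coset[OF that] .
  have "abelianization_carrier G K = (\<lambda>d. ?N #> d) ` K"
    unfolding abelianization_carrier_def FactGroup_def RCOSETS_def r_coset_def by auto
  then show ?thesis
    unfolding homology_equivariant_def using Kc by (auto simp: hom conj subsetD)
qed

lemma homology_equivariant_if_deck_id:
  fixes G :: "('a, 'b) monoid_scheme" (structure)
  assumes "group_hom G G \<psi>" "K \<lhd> G" "\<psi> ` K = K"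
    and deck: "\<forall>w\<in>carrier G. \<psi> w \<otimes> inv w \<in> K"
    and w: "w \<in> carrier G" and d: "d \<in> K"
  shows "derived G K #> \<psi> (w \<otimes> d \<otimes> inv w)
       = derived G K #> (w \<otimes> \<psi> d \<otimes> inv w)"
proof -
  interpret group_hom G G \<psi> by fact
  interpret K: normal K G by fact
  define k where "k = \<psi> w \<otimes> inv w"
  have k: "k \<in> K" "k \<in> carrier G" using deck w K.subset unfolding k_def by auto
  have dc: "d \<in> carrier G" "\<psi> d \<in> K" using d assms(3) K.subset by auto
  have "\<psi> w = k \<otimes> w" unfolding k_def using w by (simp add: m_assoc)
  then have "\<psi> (w \<otimes> d \<otimes> inv w) = k \<otimes> (w \<otimes> \<psi> d \<otimes> inv w) \<otimes> inv k"
    using w dc k by (simp add: m_assoc inv_mult_group)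
  moreover have "w \<otimes> \<psi> d \<otimes> inv w \<in> K" using K.inv_op_closed2 w dc by blast
  ultimately show ?thesis
    using G.derived_r_coset_conj[OF K.subset k(1)] by simp
qed

section \<open>Fox coefficients and faithfulness of the action on the abelianization\<close>

text \<open>For normal \<open>K\<close>, \<open>fox_coeff K i w y\<close> is the coefficient of the coset \<open>y K\<close> in the image
  in \<open>\<int>[F\<^sub>n/K]\<close> of the Fox derivative \<open>\<partial>w/\<partial>x\<^sub>i\<close>, computed letter by letter from
  \<open>\<partial>(x w) = \<partial>x + x \<partial>w\<close>, \<open>\<partial>x\<^sub>i/\<partial>x\<^sub>i = 1\<close> and \<open>\<partial>x\<^sub>i\<^sup>-\<^sup>1/\<partial>x\<^sub>i = -x\<^sub>i\<^sup>-\<^sup>1\<close>.\<close>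

fun fox_coeff :: "fg_word set \<Rightarrow> nat \<Rightarrow> fg_word \<Rightarrow> fg_word \<Rightarrow> int" where
  "fox_coeff K i [] y = 0"
| "fox_coeff K i (x # ws) y =
     (if snd x = i then (if fst x then (if y \<in> K then 1 else 0)
                         else (if fg_reduce (y @ [letter_inv x]) \<in> K then -1 else 0)) else 0)
     + fox_coeff K i ws (fg_reduce (letter_inv x # y))"

declare fox_coeff.simps(2) [simp del]

locale free_group_normal_subgroup = normal K G
  for K :: "fg_word set" and G :: "fg_word monoid" (structure) +
  fixes n :: nat
  assumes G_eq: "G = free_group n"
begin

lemma carrier_eq: "carrier G = {ws. reduced ws \<and> snd ` set ws \<subseteq> {..<n}}"
  by (simp add: G_eq carrier_free_group)

lemma mult_eq: "u \<otimes> v = fg_reduce (u @ v)"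
  by (simp add: G_eq mult_free_group)

lemma one_eq: "\<one> = []"
  by (simp add: G_eq one_free_group)

lemma inv_Nil_mult [simp]: "y \<in> carrier G \<Longrightarrow> inv [] \<otimes> y = y"
  by (simp add: one_eq [symmetric])

lemma letters_of_carrier: "u \<in> carrier G \<Longrightarrow> snd ` set u \<subseteq> {..<n}"
  by (simp add: carrier_eq)

lemma letter_in_carrier: "snd x < n \<Longrightarrow> [x] \<in> carrier G"
  by (simp add: carrier_eq)

lemma inv_letter: "snd x < n \<Longrightarrow> inv [x] = [letter_inv x]"
  by (intro inv_equality) (auto simp: mult_eq one_eq fg_reduce_def letter_inv_def letter_in_carrier)

lemma fox_coeff_Cons:
  "fox_coeff K i (x # ws) y =
     (if snd x = i then (if fst x then (if y \<in> K then 1 else 0)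
                         else (if y \<otimes> [letter_inv x] \<in> K then -1 else 0)) else 0)
     + fox_coeff K i ws ([letter_inv x] \<otimes> y)"
  by (simp add: fox_coeff.simps(2) mult_eq)

lemma fox_coeff_letter_cancel:
  assumes x: "snd x < n" and y: "y \<in> carrier G"
  shows "fox_coeff K i [x, letter_inv x] y = 0"
proof -
  have xc: "[x] \<in> carrier G" "[letter_inv x] \<in> carrier G"
    using x letter_in_carrier by auto
  have "[letter_inv x] \<otimes> y \<otimes> [x] \<in> K \<longleftrightarrow> [x] \<otimes> ([letter_inv x] \<otimes> y) \<in> K"
    using mult_mem_commute xc y by simp
  also have "[x] \<otimes> ([letter_inv x] \<otimes> y) = y"
    using xc y inv_letter[OF x] by (metis mult_inv_cancel_left)
  finally have "[letter_inv x] \<otimes> y \<otimes> [x] \<in> K \<longleftrightarrow> y \<in> K" .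
  moreover have "y \<otimes> [letter_inv x] \<in> K \<longleftrightarrow> [letter_inv x] \<otimes> y \<in> K"
    using mult_mem_commute xc y by blast
  ultimately show ?thesis
    by (cases "fst x") (simp_all add: fox_coeff_Cons)
qed

lemma fox_coeff_append:
  assumes "snd ` set u \<subseteq> {..<n}" "y \<in> carrier G"
  shows "fox_coeff K i (u @ v) y = fox_coeff K i u y + fox_coeff K i v (inv (fg_reduce u) \<otimes> y)"
  using assms
proof (induction u arbitrary: y)
  case Nil
  then show ?case by simp
next
  case (Cons x u)
  have x: "snd x < n" "snd ` set u \<subseteq> {..<n}" using Cons.prems by auto
  have xc: "[letter_inv x] \<in> carrier G" "[x] \<in> carrier G" using x letter_in_carrier by auto
  have uc: "fg_reduce u \<in> carrier G"
    using fg_reduce_in_carrier[OF x(2)] by (simp add: G_eq)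
  have "fg_reduce (x # u) = [x] \<otimes> fg_reduce u"
    using fg_reduce_append_right[of "[x]" u] by (simp add: mult_eq)
  then have "inv (fg_reduce (x # u)) \<otimes> y = inv (fg_reduce u) \<otimes> ([letter_inv x] \<otimes> y)"
    using xc uc Cons.prems inv_letter[OF x(1)] by (simp add: inv_mult_group m_assoc)
  then show ?case using Cons.IH[OF x(2)] xc Cons.prems by (simp add: fox_coeff_Cons)
qed

lemma fox_coeff_fg_push:
  assumes "snd x < n" "y \<in> carrier G"
  shows "fox_coeff K i (fg_push x ws) y = fox_coeff K i (x # ws) y"
proof (cases ws)
  case (Cons z zs)
  show ?thesis
  proof (cases "snd x = snd z \<and> fst x \<noteq> fst z")
    case True
    then have "x # ws = [x, letter_inv x] @ zs"
      using Cons by (cases x, cases z) (auto simp: letter_inv_def)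
    moreover have "fg_reduce [x, letter_inv x] = []"
      by (simp add: fg_reduce_def letter_inv_def)
    ultimately have "fox_coeff K i (x # ws) y = fox_coeff K i zs y"
      using fox_coeff_append[of "[x, letter_inv x]" y i zs] fox_coeff_letter_cancel assms
      by (simp del: fg_reduce_Cons)
    then show ?thesis using Cons True by simp
  qed (use Cons in auto)
qed simp

lemma fox_coeff_fg_reduce:
  assumes "snd ` set ws \<subseteq> {..<n}" "y \<in> carrier G"
  shows "fox_coeff K i (fg_reduce ws) y = fox_coeff K i ws y"
  using assms
proof (induction ws arbitrary: y)
  case (Cons x ws)
  have x: "snd x < n" "snd ` set ws \<subseteq> {..<n}" using Cons.prems by auto
  have "fox_coeff K i (fg_reduce (x # ws)) y = fox_coeff K i (x # fg_reduce ws) y"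
    using fox_coeff_fg_push[OF x(1) Cons.prems(2)] by (simp add: fg_reduce_Cons)
  also have "\<dots> = fox_coeff K i (x # ws) y"
    using Cons.IH[OF x(2)] letter_in_carrier[of "letter_inv x"] x Cons.prems
    by (simp add: fox_coeff_Cons)
  finally show ?case .
qed simp

lemma fox_coeff_mult:
  assumes "u \<in> carrier G" "v \<in> carrier G" "y \<in> carrier G"
  shows "fox_coeff K i (u \<otimes> v) y = fox_coeff K i u y + fox_coeff K i v (inv u \<otimes> y)"
  using assms fox_coeff_fg_reduce[of "u @ v" y i] fox_coeff_append[of u y i v]
  by (auto simp: carrier_eq mult_eq fg_reduce_reduced)

lemma fox_coeff_one [simp]: "fox_coeff K i \<one> y = 0"
  by (simp add: one_eq)

lemma fox_coeff_inv:
  assumes "u \<in> carrier G" "y \<in> carrier G"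
  shows "fox_coeff K i (inv u) y = - fox_coeff K i u (u \<otimes> y)"
  using fox_coeff_mult[of "inv u" u y i] assms by simp

lemma fox_coeff_left_mult_normal:
  assumes "snd ` set ws \<subseteq> {..<n}" "y \<in> carrier G" "k \<in> K"
  shows "fox_coeff K i ws (k \<otimes> y) = fox_coeff K i ws y"
  using assms
proof (induction ws arbitrary: y k)
  case (Cons x ws)
  have x: "snd x < n" "snd ` set ws \<subseteq> {..<n}" using Cons.prems by auto
  have xc: "[letter_inv x] \<in> carrier G" using x letter_in_carrier by simp
  have kc: "k \<in> carrier G" using Cons.prems subset by blast
  have k': "[letter_inv x] \<otimes> k \<otimes> inv [letter_inv x] \<in> K"
    using inv_op_closed2 xc Cons.prems by blast
  have "[letter_inv x] \<otimes> (k \<otimes> y) = ([letter_inv x] \<otimes> k \<otimes> inv [letter_inv x]) \<otimes> ([letter_inv x] \<otimes> y)"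
    using xc kc Cons.prems by (simp add: m_assoc)
  then have "fox_coeff K i ws ([letter_inv x] \<otimes> (k \<otimes> y)) = fox_coeff K i ws ([letter_inv x] \<otimes> y)"
    using Cons.IH[OF x(2) _ k'] xc Cons.prems by simp
  moreover have "k \<otimes> y \<otimes> [letter_inv x] \<in> K \<longleftrightarrow> y \<otimes> [letter_inv x] \<in> K"
    using subgroup_mult_mem_iff[OF subgroup_axioms] Cons.prems kc xc by (simp add: m_assoc)
  ultimately show ?case
    using subgroup_mult_mem_iff[OF subgroup_axioms] Cons.prems by (simp add: fox_coeff_Cons)
qed simp

lemma fox_coeff_normal_mult:
  assumes "k1 \<in> K" "k2 \<in> K" "y \<in> carrier G"
  shows "fox_coeff K i (k1 \<otimes> k2) y = fox_coeff K i k1 y + fox_coeff K i k2 y"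
  using assms fox_coeff_mult[of k1 k2 y i] fox_coeff_left_mult_normal[of k2 y "inv k1" i]
    letters_of_carrier subset by auto

lemma fox_coeff_normal_inv:
  assumes "k \<in> K" "y \<in> carrier G"
  shows "fox_coeff K i (inv k) y = - fox_coeff K i k y"
  using assms fox_coeff_inv[of k y i] fox_coeff_left_mult_normal[of k y k i]
    letters_of_carrier subset by auto

lemma fox_coeff_conj:
  assumes w: "w \<in> carrier G" and k: "k \<in> K" and y: "y \<in> carrier G"
  shows "fox_coeff K i (w \<otimes> k \<otimes> inv w) y = fox_coeff K i k (inv w \<otimes> y)"
proof -
  have kc: "k \<in> carrier G" using k subset by blast
  have "fox_coeff K i (w \<otimes> k \<otimes> inv w) y
      = fox_coeff K i w y + fox_coeff K i k (inv w \<otimes> y) + fox_coeff K i (inv w) (inv (w \<otimes> k) \<otimes> y)"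
    using w kc y by (simp add: fox_coeff_mult)
  also have "fox_coeff K i (inv w) (inv (w \<otimes> k) \<otimes> y)
      = - fox_coeff K i w ((w \<otimes> inv k \<otimes> inv w) \<otimes> y)"
    using w kc y by (simp add: fox_coeff_inv inv_mult_group m_assoc)
  also have "\<dots> = - fox_coeff K i w y"
    using fox_coeff_left_mult_normal letters_of_carrier w y k inv_op_closed2 by simp
  finally show ?thesis by simp
qed

lemma fox_coeff_derived:
  assumes "m \<in> derived G K" "y \<in> carrier G"
  shows "fox_coeff K i m y = 0"
proof -
  have comm: "fox_coeff K i (a \<otimes> b \<otimes> inv a \<otimes> inv b) y = 0" if "a \<in> K" "b \<in> K" for a b
    using that assms(2)
    by (simp add: fox_coeff_normal_mult fox_coeff_normal_inv)
  have sub: "generate G (derived_set G K) \<subseteq> K"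
    using derived_incl[OF order_refl subgroup_axioms] unfolding derived_def .
  from assms(1)[unfolded derived_def] show ?thesis
  proof (induction rule: generate.induct)
    case (inv h)
    then obtain a b where "a \<in> K" "b \<in> K" "h = a \<otimes> b \<otimes> inv a \<otimes> inv b" by blast
    then show ?case using comm assms(2) fox_coeff_normal_inv by simp
  next
    case (eng h1 h2)
    then have "h1 \<in> K" "h2 \<in> K" using sub by auto
    then show ?case using eng.IH assms(2) by (simp add: fox_coeff_normal_mult)
  qed (use comm in auto)
qed

lemma fox_coeff_generator_pow:
  assumes "j < n" "z \<in> carrier G"
  shows "fox_coeff K i ([(True, j)] [^] (m::nat)) z =
     (if i = j then (\<Sum>l<m. of_bool (inv ([(True, j)] [^] l) \<otimes> z \<in> K)) else 0)"
proof (induction m)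
  case (Suc m)
  have a: "[(True, j)] \<in> carrier G" using assms letter_in_carrier by simp
  then show ?case
    using fox_coeff_mult[of "[(True, j)] [^] m" "[(True, j)]" z i] Suc assms(2)
    by (simp add: fox_coeff_Cons)
qed simp

lemma fox_coeff_translation_invariant:
  assumes g: "g \<in> carrier G" and comm: "\<forall>k\<in>K. g \<otimes> k \<otimes> inv g \<otimes> inv k \<in> derived G K"
    and k: "k \<in> K" and z: "z \<in> carrier G"
  shows "fox_coeff K i k (g \<otimes> z) = fox_coeff K i k z"
proof -
  define c where "c = g \<otimes> k \<otimes> inv g \<otimes> inv k"
  have kc: "k \<in> carrier G" using k subset by blast
  have c: "c \<in> derived G K" "c \<in> K"
    using comm k derived_incl[OF order_refl subgroup_axioms] unfolding c_def by auto
  have "g \<otimes> k \<otimes> inv g = c \<otimes> k"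
    unfolding c_def using g kc by (simp add: m_assoc)
  then have "fox_coeff K i k z = fox_coeff K i (c \<otimes> k) (g \<otimes> z)"
    using fox_coeff_conj[OF g k, of "g \<otimes> z" i] g z by (simp add: m_assoc [symmetric])
  also have "\<dots> = fox_coeff K i k (g \<otimes> z)"
    using fox_coeff_normal_mult c k g z fox_coeff_derived by simp
  finally show ?thesis by simp
qed

lemma generator_power_coset:
  assumes fin: "finite (rcosets K)" and j: "j < n" and g: "g \<in> carrier G" "g \<notin> K"
    and invariant: "\<And>k z. k \<in> K \<Longrightarrow> z \<in> carrier G \<Longrightarrow> fox_coeff K j k (g \<otimes> z) = fox_coeff K j k z"
  shows "\<exists>s>0. inv ([(True, j)] [^] (s::nat)) \<otimes> g \<in> K"
proof -
  let ?a = "[(True, j)]"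
  have a: "?a \<in> carrier G" using j letter_in_carrier by simp
  obtain r :: nat where r: "r > 0" "?a [^] r \<in> K"
    using pow_mem_subgroup_of_finite_index[OF subgroup_axioms fin a] by blast
  \<comment> \<open>At \<open>z\<close>, the coefficient of \<open>a\<^sup>r\<close> counts the \<open>l < r\<close> with \<open>z \<in> a\<^sup>l K\<close>; at \<open>z = 1\<close> this includes \<open>l = 0\<close>.\<close>
  have "(\<Sum>l<r. of_bool (inv (?a [^] l) \<otimes> g \<in> K)) = (\<Sum>l<r. of_bool (inv (?a [^] l) \<in> K) :: int)"
    using invariant[OF r(2), of \<one>] fox_coeff_generator_pow[OF j] g a by simp
  also have "\<dots> > 0"
    using r(1) by (intro sum_pos2[of _ 0]) auto
  finally obtain l where l: "l < r" "inv (?a [^] l) \<otimes> g \<in> K"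
    using sum.neutral[of "{..<r}" "\<lambda>l. of_bool (inv (?a [^] l) \<otimes> g \<in> K) :: int"] by fastforce
  moreover have "l \<noteq> 0"
  proof
    assume "l = 0"
    then show False using l g by simp
  qed
  ultimately show ?thesis by blast
qed

lemma abelianization_action_faithful:
  assumes n: "2 \<le> n" and fin: "finite (rcosets K)" and g: "g \<in> carrier G"
    and comm: "\<forall>k\<in>K. g \<otimes> k \<otimes> inv g \<otimes> inv k \<in> derived G K"
  shows "g \<in> K"
proof (rule ccontr)
  assume gK: "g \<notin> K"
  let ?a = "[(True, 0)]" and ?b = "[(True, 1)]"
  have ab: "?a \<in> carrier G" "?b \<in> carrier G" using n letter_in_carrier by auto
  have invariant: "fox_coeff K i k (g \<otimes> z) = fox_coeff K i k z"
    if "k \<in> K" "z \<in> carrier G" for i k z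
    using fox_coeff_translation_invariant[OF g comm that] .
  define P where "P s \<longleftrightarrow> 0 < s \<and> inv (?a [^] (s::nat)) \<otimes> g \<in> K" for s
  define s where "s = (LEAST s. P s)"
  have "\<exists>s. P s"
    using generator_power_coset[OF fin _ g gK invariant] n unfolding P_def by auto
  then have Ps: "P s" unfolding s_def by (rule LeastI_ex)
  have not_P: "\<not> P l" if "l < s" for l
    using not_less_Least[of l P] that unfolding s_def by blast
  obtain t :: nat where "inv (?b [^] t) \<otimes> g \<in> K"
    using generator_power_coset[OF fin _ g gK invariant, where j = 1] n by auto
  then have "(inv (?a [^] s) \<otimes> g) \<otimes> inv (inv (?b [^] t) \<otimes> g) \<in> K"
    using Ps unfolding P_def by blast
  then have "inv (?a [^] s) \<otimes> ?b [^] t \<in> K"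
    using ab g by (simp add: inv_mult_group m_assoc)
  then have "inv (inv (?a [^] s) \<otimes> ?b [^] t) \<in> K" by blast
  then have "?a [^] s \<otimes> inv (?b [^] t) \<in> K"
    using ab mult_mem_commute by (simp add: inv_mult_group)
  \<comment> \<open>Its coefficient at \<open>g\<close> vanishes by the minimality of \<open>s\<close>, while its coefficient at \<open>1\<close> does not.\<close>
  then have "fox_coeff K 0 (?a [^] s \<otimes> inv (?b [^] t)) (g \<otimes> \<one>)
           = fox_coeff K 0 (?a [^] s \<otimes> inv (?b [^] t)) \<one>"
    using invariant by blast
  moreover have "fox_coeff K 0 (?a [^] s \<otimes> inv (?b [^] t)) z
      = (\<Sum>l<s. of_bool (inv (?a [^] l) \<otimes> z \<in> K))" if "z \<in> carrier G" for z
    using ab that n by (simp add: fox_coeff_mult fox_coeff_inv fox_coeff_generator_pow)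
  ultimately have "(\<Sum>l<s. of_bool (inv (?a [^] l) \<otimes> g \<in> K)) = (\<Sum>l<s. of_bool (inv (?a [^] l) \<in> K) :: int)"
    using g ab by simp
  moreover have "inv (?a [^] l) \<otimes> g \<notin> K" if "l < s" for l
    using not_P[OF that] gK g by (cases "l = 0") (auto simp: P_def)
  then have "(\<Sum>l<s. of_bool (inv (?a [^] l) \<otimes> g \<in> K) :: int) = 0"
    by (intro sum.neutral) auto
  moreover have "(\<Sum>l<s. of_bool (inv (?a [^] l) \<in> K) :: int) > 0"
    using Ps unfolding P_def by (intro sum_pos2[of _ 0]) auto
  ultimately show False by simp
qed

lemma deck_id_if_homology_equivariant:
  assumes n: "2 \<le> n" and fin: "finite (rcosets K)"
    and hom: "group_hom G G \<psi>" and \<psi>K: "\<psi> ` K = K"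
    and equivariant: "\<forall>w\<in>carrier G. \<forall>d\<in>K.
      derived G K #> \<psi> (w \<otimes> d \<otimes> inv w) = derived G K #> (w \<otimes> \<psi> d \<otimes> inv w)"
    and w: "w \<in> carrier G"
  shows "\<psi> w \<otimes> inv w \<in> K"
proof -
  let ?N = "derived G K"
  interpret N: normal ?N G
    using derived_is_normal[OF normal_axioms] .
  define g where "g = inv w \<otimes> \<psi> w"
  have hw: "\<psi> w \<in> carrier G" using group_hom.hom_closed[OF hom w] .
  have gc: "g \<in> carrier G" unfolding g_def using w hw by simp
  have "g \<otimes> k \<otimes> inv g \<otimes> inv k \<in> ?N" if k: "k \<in> K" for k
  proof -
    from k \<psi>K obtain d where d: "d \<in> K" "\<psi> d = k" by (metis imageE)
    have kc: "k \<in> carrier G" "d \<in> carrier G" using k d subset by auto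
    have "?N #> (\<psi> w \<otimes> k \<otimes> inv (\<psi> w)) = ?N #> (w \<otimes> k \<otimes> inv w)"
      using equivariant[rule_format, OF w d(1)] d(2) w kc
      by (simp add: group_hom.hom_inv[OF hom] group_hom.hom_mult[OF hom])
    then have "(\<lambda>x. inv w \<otimes> x \<otimes> inv (inv w)) ` (?N #> (\<psi> w \<otimes> k \<otimes> inv (\<psi> w)))
             = (\<lambda>x. inv w \<otimes> x \<otimes> inv (inv w)) ` (?N #> (w \<otimes> k \<otimes> inv w))"
      by simp
    then have "?N #> (g \<otimes> k \<otimes> inv g) = ?N #> k"
      using N.conj_image_r_coset[of "inv w"] w hw kc
      by (simp add: g_def m_assoc inv_mult_group)
    moreover have "g \<otimes> k \<otimes> inv g \<in> carrier G" using gc kc by simp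
    ultimately have "g \<otimes> k \<otimes> inv g \<in> ?N #> k"
      using rcos_self[OF _ N.subgroup_axioms] by metis
    then show ?thesis
      using N.rcos_module_imp[OF is_group] kc by (simp add: m_assoc)
  qed
  then have "g \<in> K"
    using abelianization_action_faithful[OF n fin gc] by blast
  then have "w \<otimes> g \<otimes> inv w \<in> K" using w inv_op_closed2 by blast
  then show ?thesis unfolding g_def using w hw by (simp add: m_assoc)
qed

end

theorem lemma3p2:
  fixes n :: nat and \<psi> :: "fg_word \<Rightarrow> fg_word" and K :: "fg_word set"
  assumes "n \<ge> 2"
    and "\<psi> \<in> auto (free_group n)"
    and "characteristic (free_group n) K"
    and "finite (rcosets\<^bsub>free_group n\<^esub> K)"
  shows "deck_group_induced_is_id (free_group n) K \<psi> \<longleftrightarrow> homology_equivariant (free_group n) K \<psi>"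
proof -
  interpret G: group "free_group n" by (rule group_free_group)
  have K: "K \<lhd> free_group n" using G.characteristic_imp_normal[OF assms(3)] .
  interpret F: free_group_normal_subgroup K "free_group n" n
    using K by (simp add: free_group_normal_subgroup_def free_group_normal_subgroup_axioms_def)
  have \<psi>K: "\<psi> ` K = K" using assms(2,3) unfolding characteristic_def by blast
  have hom: "group_hom (free_group n) (free_group n) \<psi>"
    using assms(2) G.is_group by (simp add: auto_def group_hom_def group_hom_axioms_def)
  show ?thesis
    unfolding deck_group_induced_is_id_iff[OF hom F.subgroup_axioms \<psi>K]
      homology_equivariant_iff[OF hom K \<psi>K]
    using homology_equivariant_if_deck_id[OF hom K \<psi>K]
      F.deck_id_if_homology_equivariant[OF assms(1,4) hom \<psi>K]
    by (intro iffI ballI) simp_all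
qed

end
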